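(* Let $y\in\mathbb{R}^N$, $\lambda>0$ and $\alpha\geq 0$, and consider $$\min_{x\in\mathbb{R}^N}\ \|x\|_1-\alpha\|x\|_2+\frac{1}{2\lambda}\|x-y\|_2^2 .$$ The optimal solutions $x^*$ of this problem are characterized as follows. 1) If $\|y\|_\infty>\lambda$, then the optimal solution is $x^*=z(\|z\|_2+\alpha\lambda)/\|z\|_2$, where $z=\mathcal{S}_1(y,\lambda)$. 2) If $\|y\|_\infty=\lambda$, then $x^*$ is an optimal solution if and only if the following three conditions hold: $x^*_i=0$ whenever $|y_i|<\lambda$; $\|x^*\|_2=\alpha\lambda$; and $x^*_iy_i\geq 0$ for all $i$. If more than one component of $y$ has the maximum absolute value $\lambda$, the optimal solution is not unique; in fact, there are infinitely many optimal solutions. 3) If $(1-\alpha)\lambda<\|y\|_\infty<\lambda$, then $x^*$ is an optimal solution if and only if the following hold: $x^*$ is 1-sparse (exactly one nonzero component); $x^*_i=0$ whenever $|y_i|<\|y\|_\infty$; $\|x^*\|_2=\|y\|_\infty+(\alpha-1)\lambda$; and $x^*_iy_i\geq 0$ for all $i$. The number of optimal solutions equals the number of components of $y$ whose absolute value equals $\|y\|_\infty$. 4) If $\|y\|_\infty\leq(1-\alpha)\lambda$, then the optimal solution is $x^*=0$.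
   Context: The soft shrinkage operator $\mathcal{S}_1(y,\lambda)$ acts componentwise on $y\in\mathbb{R}^N$: $$\mathcal{S}_1(y,\lambda)_i=\begin{cases} y_i-\lambda & \text{if } y_i>\lambda,\\ 0 & \text{if } |y_i|\leq\lambda,\\ y_i+\lambda & \text{if } y_i<-\lambda.\end{cases}$$ *)

theory Defs
  imports "HOL-Analysis.Analysis"
begin

text \<open>Vectors in R^N are modelled as real ^ 'n for a finite index type 'n.
  The Euclidean norm (norm) on real ^ 'n is the 2-norm.\<close>

definition l1norm :: "real ^ 'n \<Rightarrow> real" where
  "l1norm x = (\<Sum>i\<in>UNIV. \<bar>x $ i\<bar>)"

definition linfnorm :: "real ^ 'n \<Rightarrow> real" where
  "linfnorm x = Max (range (\<lambda>i. \<bar>x $ i\<bar>))"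

definition soft_shrink :: "real ^ 'n \<Rightarrow> real \<Rightarrow> real ^ 'n" where
  "soft_shrink y lam = (\<chi> i. if y $ i > lam then y $ i - lam
                              else if y $ i < - lam then y $ i + lam else 0)"

definition l1l2_obj :: "real \<Rightarrow> real \<Rightarrow> real ^ 'n \<Rightarrow> real ^ 'n \<Rightarrow> real" where
  "l1l2_obj alpha lam y x = l1norm x - alpha * norm x + 1 / (2 * lam) * (norm (x - y))\<^sup>2"

definition l1l2_optimal :: "real \<Rightarrow> real \<Rightarrow> real ^ 'n \<Rightarrow> real ^ 'n \<Rightarrow> bool" where
  "l1l2_optimal alpha lam y x = (\<forall>w. l1l2_obj alpha lam y x \<le> l1l2_obj alpha lam y w)"

end

theory Submission
  imports Defs
begin

text \<open>Multiplying the objective by \<open>lam\<close> and dropping the constant \<open>\<parallel>y\<parallel>\<^sub>2\<^sup>2/2\<close>, one minimizes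
  \<open>R x = lam \<parallel>x\<parallel>\<^sub>1 - \<langle>x,y\<rangle> - alpha lam \<parallel>x\<parallel>\<^sub>2 + \<parallel>x\<parallel>\<^sub>2\<^sup>2/2\<close>. With \<open>m = \<parallel>y\<parallel>\<^sub>\<infinity>\<close> and
  \<open>c = m + (alpha - 1) lam\<close> this splits as
  \<open>(m \<parallel>x\<parallel>\<^sub>1 - \<langle>x,y\<rangle>) + (lam - m)(\<parallel>x\<parallel>\<^sub>1 - \<parallel>x\<parallel>\<^sub>2) + \<parallel>x\<parallel>\<^sub>2\<^sup>2/2 - c \<parallel>x\<parallel>\<^sub>2\<close>.
  For \<open>m \<le> lam\<close> the first two brackets are nonnegative (Hoelder, and \<open>\<parallel>x\<parallel>\<^sub>2 \<le> \<parallel>x\<parallel>\<^sub>1\<close>), so the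
  minimizers are the \<open>x\<close> of norm \<open>c\<close> for which both vanish when \<open>c \<ge> 0\<close>, and \<open>x = 0\<close> when
  \<open>c \<le> 0\<close>; vanishing of the second bracket for \<open>m < lam\<close> is exactly 1-sparsity.
  For \<open>m > lam\<close> one pairs \<open>x\<close> instead with the clipping \<open>y - z\<close>, \<open>z = S\<^sub>1(y,lam)\<close>, whose
  sup-norm is \<open>lam\<close>, and the Cauchy-Schwarz gap \<open>\<parallel>x\<parallel>\<^sub>2\<parallel>z\<parallel>\<^sub>2 - \<langle>x,z\<rangle>\<close> takes the place of the
  second bracket; this forces the minimizer to be the positive multiple of \<open>z\<close> of norm
  \<open>\<parallel>z\<parallel>\<^sub>2 + alpha lam\<close>.\<close>

definition l1l2_reduced_obj :: "real \<Rightarrow> real \<Rightarrow> real ^ 'n \<Rightarrow> real ^ 'n \<Rightarrow> real" where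
  "l1l2_reduced_obj alpha lam y x =
     lam * l1norm x - inner x y - alpha * lam * norm x + (norm x)\<^sup>2 / 2"

lemma l1l2_obj_eq_reduced_obj:
  assumes "lam > 0"
  shows "l1l2_obj alpha lam y x = (l1l2_reduced_obj alpha lam y x + (norm y)\<^sup>2 / 2) / lam"
proof -
  have "(norm (x - y))\<^sup>2 = (norm x)\<^sup>2 - 2 * inner x y + (norm y)\<^sup>2"
    by (simp add: power2_norm_eq_inner inner_diff inner_commute)
  then show ?thesis
    using assms by (simp add: l1l2_obj_def l1l2_reduced_obj_def field_simps)
qed

lemma l1l2_optimal_iff_reduced_obj_le:
  assumes "lam > 0"
  shows "l1l2_optimal alpha lam y x \<longleftrightarrow>
           (\<forall>w. l1l2_reduced_obj alpha lam y x \<le> l1l2_reduced_obj alpha lam y w)"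
  using assms by (simp add: l1l2_optimal_def l1l2_obj_eq_reduced_obj divide_le_cancel)

lemma l1l2_optimal_iff_reduced_obj_eq_bound:
  assumes "lam > 0"
    and "\<And>w. B \<le> l1l2_reduced_obj alpha lam y w"
    and "l1l2_reduced_obj alpha lam y x\<^sub>0 = B"
  shows "l1l2_optimal alpha lam y x \<longleftrightarrow> l1l2_reduced_obj alpha lam y x = B"
  using assms by (metis l1l2_optimal_iff_reduced_obj_le order.antisym)

lemma l1norm_nonneg: "0 \<le> l1norm x"
  by (simp add: l1norm_def sum_nonneg)

lemma norm_le_l1norm: "norm x \<le> l1norm x"
  unfolding l1norm_def by (rule norm_le_l1_cart)

lemma l1norm_scaleR: "l1norm (c *\<^sub>R x) = \<bar>c\<bar> * l1norm x"
  by (simp add: l1norm_def abs_mult sum_distrib_left)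

lemma l1norm_axis: "l1norm (axis i a :: real ^ 'n) = \<bar>a\<bar>"
  by (simp add: l1norm_def axis_def if_distrib cong: if_cong)

lemma norm_axis_real: "norm (axis i a :: real ^ 'n) = \<bar>a\<bar>"
  by (simp add: norm_eq_sqrt_inner inner_axis_axis)

lemma norm_less_l1norm:
  fixes x :: "real ^ 'n"
  assumes "j \<noteq> k" and "x $ j \<noteq> 0" and "x $ k \<noteq> 0"
  shows "norm x < l1norm x"
proof -
  let ?L = "l1norm x"
  have le: "\<bar>x $ i\<bar> \<le> ?L" for i
    unfolding l1norm_def by (rule member_le_sum) auto
  have "\<bar>x $ j\<bar> + \<bar>x $ k\<bar> \<le> ?L"
    using sum_mono2[of UNIV "{j, k}" "\<lambda>i. \<bar>x $ i\<bar>"] assms(1) by (simp add: l1norm_def)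
  then have lt: "\<bar>x $ j\<bar> < ?L"
    using assms(3) by simp
  have "(norm x)\<^sup>2 = (\<Sum>i\<in>UNIV. \<bar>x $ i\<bar> * \<bar>x $ i\<bar>)"
    by (simp add: power2_norm_eq_inner inner_vec_def)
  also have "\<dots> < (\<Sum>i\<in>UNIV. \<bar>x $ i\<bar> * ?L)"
  proof (rule sum_strict_mono_ex1)
    show "\<forall>i\<in>UNIV. \<bar>x $ i\<bar> * \<bar>x $ i\<bar> \<le> \<bar>x $ i\<bar> * ?L"
      by (intro ballI mult_left_mono le abs_ge_zero)
    show "\<exists>i\<in>UNIV. \<bar>x $ i\<bar> * \<bar>x $ i\<bar> < \<bar>x $ i\<bar> * ?L"
      using lt assms(2) by (intro bexI[of _ j] mult_strict_left_mono) auto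
  qed simp
  also have "\<dots> = ?L\<^sup>2"
    by (simp add: l1norm_def power2_eq_square sum_distrib_right)
  finally show ?thesis
    using l1norm_nonneg power2_less_imp_less by blast
qed

lemma l1norm_eq_norm_iff_card_support:
  fixes x :: "real ^ 'n"
  assumes "x \<noteq> 0"
  shows "l1norm x = norm x \<longleftrightarrow> card {i. x $ i \<noteq> 0} = 1"
proof
  assume "card {i. x $ i \<noteq> 0} = 1"
  then obtain k where "{i. x $ i \<noteq> 0} = {k}"
    by (auto simp: card_1_singleton_iff)
  then have "x = axis k (x $ k)"
    by (auto simp: vec_eq_iff axis_def)
  then show "l1norm x = norm x"
    by (metis norm_axis_real l1norm_axis)
next
  assume eq: "l1norm x = norm x"
  obtain j where j: "x $ j \<noteq> 0"
    using assms by (auto simp: vec_eq_iff)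
  have "{i. x $ i \<noteq> 0} = {j}"
    using j norm_less_l1norm[of j _ x] eq by fastforce
  then show "card {i. x $ i \<noteq> 0} = 1"
    by simp
qed

lemma abs_le_linfnorm: "\<bar>y $ i\<bar> \<le> linfnorm y"
  unfolding linfnorm_def by (rule Max_ge) auto

lemma linfnorm_attained:
  obtains i where "\<bar>y $ i\<bar> = linfnorm y"
proof -
  have "linfnorm y \<in> range (\<lambda>i. \<bar>y $ i\<bar>)"
    unfolding linfnorm_def by (rule Max_in) auto
  then show ?thesis
    using that by auto
qed

lemma linfnorm_le_iff: "linfnorm y \<le> b \<longleftrightarrow> (\<forall>i. \<bar>y $ i\<bar> \<le> b)"
  unfolding linfnorm_def by (subst Max_le_iff) auto

lemma linfnorm_pos:
  fixes y :: "real ^ 'n"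
  assumes "y \<noteq> 0"
  shows "0 < linfnorm y"
proof -
  obtain i where "y $ i \<noteq> 0"
    using assms by (auto simp: vec_eq_iff)
  then show ?thesis
    using abs_le_linfnorm[of y i] by simp
qed

lemma mult_le_bound_mult_abs:
  fixes a b m :: real
  assumes "\<bar>b\<bar> \<le> m"
  shows "a * b \<le> m * \<bar>a\<bar>"
proof -
  have "a * b \<le> \<bar>a\<bar> * \<bar>b\<bar>"
    by (metis abs_ge_self abs_mult)
  also have "\<dots> \<le> m * \<bar>a\<bar>"
    using assms by (metis abs_ge_zero mult.commute mult_left_mono)
  finally show ?thesis .
qed

lemma mult_eq_bound_mult_abs_iff:
  fixes a b m :: real
  assumes "\<bar>b\<bar> \<le> m"
  shows "a * b = m * \<bar>a\<bar> \<longleftrightarrow> 0 \<le> a * b \<and> (\<bar>b\<bar> < m \<longrightarrow> a = 0)"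
proof -
  have le1: "a * b \<le> \<bar>a\<bar> * \<bar>b\<bar>"
    by (metis abs_ge_self abs_mult)
  have le2: "\<bar>a\<bar> * \<bar>b\<bar> \<le> m * \<bar>a\<bar>"
    using assms by (metis abs_ge_zero mult.commute mult_left_mono)
  have "a * b = \<bar>a\<bar> * \<bar>b\<bar> \<longleftrightarrow> 0 \<le> a * b"
    by (metis abs_mult abs_of_nonneg abs_ge_zero)
  moreover have "\<bar>a\<bar> * \<bar>b\<bar> = m * \<bar>a\<bar> \<longleftrightarrow> (\<bar>b\<bar> < m \<longrightarrow> a = 0)"
    using assms by (auto simp: mult.commute)
  ultimately show ?thesis
    using le1 le2 by linarith
qed

lemma inner_le_linfnorm_mult_l1norm: "inner x y \<le> linfnorm y * l1norm x"
  unfolding inner_vec_def l1norm_def sum_distrib_left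
  by (intro sum_mono) (simp add: mult_le_bound_mult_abs abs_le_linfnorm)

lemma inner_eq_linfnorm_mult_l1norm_iff:
  "inner x y = linfnorm y * l1norm x \<longleftrightarrow>
     (\<forall>i. 0 \<le> x $ i * y $ i \<and> (\<bar>y $ i\<bar> < linfnorm y \<longrightarrow> x $ i = 0))"
proof -
  define gap where "gap i = linfnorm y * \<bar>x $ i\<bar> - x $ i * y $ i" for i
  have gap_nonneg: "0 \<le> gap i" for i
    using mult_le_bound_mult_abs[OF abs_le_linfnorm] by (simp add: gap_def)
  have "inner x y = linfnorm y * l1norm x \<longleftrightarrow> (\<Sum>i\<in>UNIV. gap i) = 0"
    by (auto simp: gap_def inner_vec_def l1norm_def sum_distrib_left sum_subtractf)
  also have "\<dots> \<longleftrightarrow> (\<forall>i. gap i = 0)"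
    using gap_nonneg by (simp add: sum_nonneg_eq_0_iff)
  also have "\<dots> \<longleftrightarrow> (\<forall>i. x $ i * y $ i = linfnorm y * \<bar>x $ i\<bar>)"
    by (auto simp: gap_def)
  also have "\<dots> \<longleftrightarrow> (\<forall>i. 0 \<le> x $ i * y $ i \<and> (\<bar>y $ i\<bar> < linfnorm y \<longrightarrow> x $ i = 0))"
    by (simp add: mult_eq_bound_mult_abs_iff[OF abs_le_linfnorm])
  finally show ?thesis .
qed

lemma l1l2_reduced_obj_split:
  "l1l2_reduced_obj alpha lam y x =
     (linfnorm y * l1norm x - inner x y) + (lam - linfnorm y) * (l1norm x - norm x)
     + (norm x)\<^sup>2 / 2 - (linfnorm y + (alpha - 1) * lam) * norm x"
  by (simp add: l1l2_reduced_obj_def algebra_simps)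

text \<open>Unlike \<open>sgn\<close>, \<open>sign1\<close> never vanishes, so \<open>axis i (c * sign1 (y $ i))\<close> has norm \<open>c\<close>
  even when \<open>y $ i = 0\<close>.\<close>

definition sign1 :: "real \<Rightarrow> real" where
  "sign1 b = (if b < 0 then -1 else 1)"

lemma sign1_neq_0: "sign1 b \<noteq> 0"
  by (simp add: sign1_def)

lemma inner_axis_sign1: "inner (axis i (c * sign1 (y $ i))) y = c * \<bar>y $ i\<bar>"
  by (simp add: inner_axis' sign1_def)

lemma norm_axis_sign1: "0 \<le> c \<Longrightarrow> norm (axis i (c * sign1 b) :: real ^ 'n) = c"
  by (simp add: norm_axis_real sign1_def abs_mult)

lemma l1norm_axis_sign1: "0 \<le> c \<Longrightarrow> l1norm (axis i (c * sign1 b) :: real ^ 'n) = c"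
  by (simp add: l1norm_axis sign1_def abs_mult)

lemma axis_sign1_mult_nonneg: "0 \<le> a \<Longrightarrow> 0 \<le> axis i (a * sign1 (y $ i)) $ l * y $ l"
  by (auto simp: axis_def sign1_def mult_nonneg_nonpos2 zero_le_mult_iff)

lemma l1l2_optimal_iff_linfnorm_le:
  fixes y x :: "real ^ 'n"
  assumes "lam > 0" and "linfnorm y \<le> lam" and "0 \<le> linfnorm y + (alpha - 1) * lam"
  shows "l1l2_optimal alpha lam y x \<longleftrightarrow>
           inner x y = linfnorm y * l1norm x \<and> (lam - linfnorm y) * (l1norm x - norm x) = 0
           \<and> norm x = linfnorm y + (alpha - 1) * lam"
proof -
  define c where "c = linfnorm y + (alpha - 1) * lam"
  have c: "0 \<le> c"
    using assms(3) by (simp add: c_def)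
  have split: "l1l2_reduced_obj alpha lam y w =
      (linfnorm y * l1norm w - inner w y) + (lam - linfnorm y) * (l1norm w - norm w)
      + (norm w - c)\<^sup>2 / 2 - c\<^sup>2 / 2" for w
    by (simp add: l1l2_reduced_obj_split c_def power2_eq_square field_simps)
  have holder_gap: "0 \<le> linfnorm y * l1norm w - inner w y" for w
    using inner_le_linfnorm_mult_l1norm[of w y] by simp
  have sparsity_gap: "0 \<le> (lam - linfnorm y) * (l1norm w - norm w)" for w :: "real ^ 'n"
    using assms(2) norm_le_l1norm[of w] by simp
  have bound: "- c\<^sup>2 / 2 \<le> l1l2_reduced_obj alpha lam y w" for w
    using split[of w] holder_gap[of w] sparsity_gap[of w] zero_le_power2[of "norm w - c"] by linarith
  obtain i where i: "\<bar>y $ i\<bar> = linfnorm y"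
    by (rule linfnorm_attained)
  have "l1l2_reduced_obj alpha lam y (axis i (c * sign1 (y $ i))) = - c\<^sup>2 / 2"
    using split c i by (simp add: inner_axis_sign1 norm_axis_sign1 l1norm_axis_sign1)
  note optimal_iff = l1l2_optimal_iff_reduced_obj_eq_bound[OF assms(1) bound this]
  have "l1l2_reduced_obj alpha lam y x = - c\<^sup>2 / 2 \<longleftrightarrow>
      linfnorm y * l1norm x - inner x y = 0 \<and> (lam - linfnorm y) * (l1norm x - norm x) = 0
      \<and> (norm x - c)\<^sup>2 / 2 = 0"
    using split[of x] holder_gap[of x] sparsity_gap[of x] zero_le_power2[of "norm x - c"]
    by (intro iffI conjI; (elim conjE)?) linarith+
  then show ?thesis
    unfolding optimal_iff c_def[symmetric] by auto
qed

lemma l1l2_optimal_iff_linfnorm_eq: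
  fixes y x :: "real ^ 'n"
  assumes "lam > 0" and "alpha \<ge> 0" and "linfnorm y = lam"
  shows "l1l2_optimal alpha lam y x \<longleftrightarrow>
           (\<forall>i. \<bar>y $ i\<bar> < lam \<longrightarrow> x $ i = 0) \<and> norm x = alpha * lam \<and> (\<forall>i. 0 \<le> x $ i * y $ i)"
proof -
  have "linfnorm y + (alpha - 1) * lam = alpha * lam"
    using assms(3) by (simp add: algebra_simps)
  then show ?thesis
    using l1l2_optimal_iff_linfnorm_le[of lam y alpha x] assms
    by (auto simp: inner_eq_linfnorm_mult_l1norm_iff)
qed

lemma infinite_l1l2_optimal_linfnorm_eq:
  fixes y :: "real ^ 'n"
  assumes "lam > 0" and "alpha > 0" and "linfnorm y = lam" and "card {i. \<bar>y $ i\<bar> = lam} > 1"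
  shows "infinite {x. l1l2_optimal alpha lam y x}"
proof -
  obtain j k where jk: "\<bar>y $ j\<bar> = lam" "\<bar>y $ k\<bar> = lam" "j \<noteq> k"
    using assms(4) card_le_Suc0_iff_eq[of "{i. \<bar>y $ i\<bar> = lam}"] by fastforce
  define r where "r = alpha * lam"
  have r: "0 < r"
    using assms(1,2) by (simp add: r_def)
  \<comment> \<open>a quarter circle of radius \<open>alpha lam\<close> in the plane of the axes \<open>j\<close> and \<open>k\<close>\<close>
  define f :: "real \<Rightarrow> real ^ 'n" where
    "f t = axis j (r * t * sign1 (y $ j)) + axis k (r * sqrt (1 - t\<^sup>2) * sign1 (y $ k))" for t
  have "l1l2_optimal alpha lam y (f t)" if t: "t \<in> {0..1}" for t
  proof -
    have "0 \<le> 1 - t\<^sup>2"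
      using t by (simp add: power_le_one)
    have "(norm (f t))\<^sup>2 = (r * t)\<^sup>2 + (r * sqrt (1 - t\<^sup>2))\<^sup>2"
      unfolding power2_norm_eq_inner f_def inner_add_left inner_add_right inner_axis_axis
      using jk(3) by (simp add: sign1_def power2_eq_square)
    also have "\<dots> = r\<^sup>2"
      using \<open>0 \<le> 1 - t\<^sup>2\<close> by (simp add: power_mult_distrib algebra_simps)
    finally have "(norm (f t))\<^sup>2 = r\<^sup>2" .
    then have "norm (f t) = alpha * lam"
      using r by (simp add: r_def power2_eq_iff_nonneg)
    moreover have "\<bar>y $ i\<bar> < lam \<longrightarrow> f t $ i = 0" for i
      using jk by (simp add: f_def axis_def)
    moreover have "0 \<le> f t $ i * y $ i" for i
      using axis_sign1_mult_nonneg[of "r * t" j y i] axis_sign1_mult_nonneg[of "r * sqrt (1 - t\<^sup>2)" k y i]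
        r t \<open>0 \<le> 1 - t\<^sup>2\<close>
      by (simp add: f_def distrib_right)
    ultimately show ?thesis
      using l1l2_optimal_iff_linfnorm_eq[OF assms(1) _ assms(3)] assms(2) by simp
  qed
  then have "f ` {0..1} \<subseteq> {x. l1l2_optimal alpha lam y x}"
    by auto
  moreover have "inj_on f {0..1}"
  proof (rule inj_onI)
    fix t u assume "f t = f u"
    then have "f t $ j = f u $ j"
      by simp
    then have "r * t * sign1 (y $ j) = r * u * sign1 (y $ j)"
      using jk(3) by (simp add: f_def axis_def)
    then have "(r * sign1 (y $ j)) * t = (r * sign1 (y $ j)) * u"
      by (simp only: ac_simps)
    moreover have "r * sign1 (y $ j) \<noteq> 0"
      using r sign1_neq_0 by simp
    ultimately show "t = u"
      by simp
  qed
  then have "infinite (f ` {0..1})"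
    using finite_imageD by (metis infinite_Icc zero_less_one)
  ultimately show ?thesis
    by (meson finite_subset)
qed

lemma l1l2_optimal_iff_linfnorm_between:
  fixes y x :: "real ^ 'n"
  assumes "lam > 0" and "(1 - alpha) * lam < linfnorm y" and "linfnorm y < lam"
  shows "l1l2_optimal alpha lam y x \<longleftrightarrow>
           card {i. x $ i \<noteq> 0} = 1 \<and> (\<forall>i. \<bar>y $ i\<bar> < linfnorm y \<longrightarrow> x $ i = 0)
           \<and> norm x = linfnorm y + (alpha - 1) * lam \<and> (\<forall>i. 0 \<le> x $ i * y $ i)"
proof -
  have c: "0 < linfnorm y + (alpha - 1) * lam"
    using assms(2) by (simp add: algebra_simps)
  have "(lam - linfnorm y) * (l1norm x - norm x) = 0 \<longleftrightarrow> card {i. x $ i \<noteq> 0} = 1"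
    if "norm x = linfnorm y + (alpha - 1) * lam"
  proof -
    have "x \<noteq> 0"
      using that c by auto
    then show ?thesis
      using assms(3) l1norm_eq_norm_iff_card_support[of x] by auto
  qed
  then show ?thesis
    using l1l2_optimal_iff_linfnorm_le[of lam y alpha x] assms c
    by (auto simp: inner_eq_linfnorm_mult_l1norm_iff)
qed

lemma card_l1l2_optimal_linfnorm_between:
  fixes y :: "real ^ 'n"
  assumes "lam > 0" and "(1 - alpha) * lam < linfnorm y" and "linfnorm y < lam" and "y \<noteq> 0"
  shows "card {x. l1l2_optimal alpha lam y x} = card {i. \<bar>y $ i\<bar> = linfnorm y}"
proof -
  define c where "c = linfnorm y + (alpha - 1) * lam"
  have c: "0 < c"
    using assms(2) by (simp add: c_def algebra_simps)
  define w where "w i = (axis i (c * sign1 (y $ i)) :: real ^ 'n)" for i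
  note optimal_iff = l1l2_optimal_iff_linfnorm_between[OF assms(1-3), folded c_def]
  have "{x. l1l2_optimal alpha lam y x} = w ` {i. \<bar>y $ i\<bar> = linfnorm y}"
  proof (intro equalityI subsetI)
    fix x assume "x \<in> {x. l1l2_optimal alpha lam y x}"
    then have x: "card {i. x $ i \<noteq> 0} = 1" "\<forall>i. \<bar>y $ i\<bar> < linfnorm y \<longrightarrow> x $ i = 0"
        "norm x = c" "\<forall>i. 0 \<le> x $ i * y $ i"
      using optimal_iff by auto
    then obtain i where support: "{l. x $ l \<noteq> 0} = {i}"
      by (auto simp: card_1_singleton_iff)
    then have x_eq: "x = axis i (x $ i)"
      by (auto simp: vec_eq_iff axis_def)
    have y_i: "\<bar>y $ i\<bar> = linfnorm y"
      using x(2) support abs_le_linfnorm[of y i] by force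
    then have "y $ i \<noteq> 0"
      using linfnorm_pos[OF assms(4)] by auto
    \<comment> \<open>this fixes the sign of \<open>x $ i\<close>; for \<open>y = 0\<close> both signs would be optimal\<close>
    moreover have "\<bar>x $ i\<bar> = c"
      using x(3) x_eq norm_axis_real by metis
    ultimately have "x $ i = c * sign1 (y $ i)"
      using x(4)[rule_format, of i] by (auto simp: sign1_def zero_le_mult_iff)
    then show "x \<in> w ` {i. \<bar>y $ i\<bar> = linfnorm y}"
      using x_eq y_i by (auto simp: w_def)
  next
    fix x assume "x \<in> w ` {i. \<bar>y $ i\<bar> = linfnorm y}"
    then obtain i where y_i: "\<bar>y $ i\<bar> = linfnorm y" and x: "x = w i"
      by auto
    have "{l. x $ l \<noteq> 0} = {i}"
      using c sign1_neq_0 by (auto simp: x w_def axis_def)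
    moreover have "norm x = c"
      using c by (simp add: x w_def norm_axis_sign1)
    moreover have "\<bar>y $ l\<bar> < linfnorm y \<longrightarrow> x $ l = 0" for l
      using y_i by (auto simp: x w_def axis_def)
    ultimately show "x \<in> {x. l1l2_optimal alpha lam y x}"
      using optimal_iff c axis_sign1_mult_nonneg[of c i y] by (simp add: x w_def)
  qed
  moreover have "inj_on w {i. \<bar>y $ i\<bar> = linfnorm y}"
    using c by (intro inj_onI) (simp add: w_def axis_eq_axis sign1_neq_0)
  ultimately show ?thesis
    by (simp add: card_image)
qed

lemma l1l2_optimal_iff_linfnorm_small:
  fixes y x :: "real ^ 'n"
  assumes "lam > 0" and "alpha \<ge> 0" and "linfnorm y \<le> (1 - alpha) * lam"
  shows "l1l2_optimal alpha lam y x \<longleftrightarrow> x = 0"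
proof -
  have "linfnorm y \<le> lam"
    using assms(3) mult_nonneg_nonneg[OF assms(2) less_imp_le[OF assms(1)]]
    by (simp add: left_diff_distrib)
  have c: "linfnorm y + (alpha - 1) * lam \<le> 0"
    using assms(3) by (simp add: algebra_simps)
  have bound: "(norm w)\<^sup>2 / 2 \<le> l1l2_reduced_obj alpha lam y w" for w
  proof -
    have "0 \<le> linfnorm y * l1norm w - inner w y"
      using inner_le_linfnorm_mult_l1norm[of w y] by simp
    moreover have "0 \<le> (lam - linfnorm y) * (l1norm w - norm w)"
      using \<open>linfnorm y \<le> lam\<close> norm_le_l1norm[of w] by simp
    moreover have "0 \<le> - (linfnorm y + (alpha - 1) * lam) * norm w"
      using c by simp
    ultimately show ?thesis
      using l1l2_reduced_obj_split[of alpha lam y w] by linarith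
  qed
  have "l1l2_reduced_obj alpha lam y 0 = 0"
    by (simp add: l1l2_reduced_obj_def l1norm_def)
  moreover have "0 \<le> l1l2_reduced_obj alpha lam y w" for w
    using bound[of w] zero_le_power2[of "norm w"] by linarith
  ultimately have "l1l2_optimal alpha lam y x \<longleftrightarrow> l1l2_reduced_obj alpha lam y x = 0"
    by (rule l1l2_optimal_iff_reduced_obj_eq_bound[OF assms(1), rotated])
  also have "\<dots> \<longleftrightarrow> x = 0"
    using bound[of x] \<open>l1l2_reduced_obj alpha lam y 0 = 0\<close> by auto
  finally show ?thesis .
qed

lemma linfnorm_residual_soft_shrink_le:
  "0 \<le> lam \<Longrightarrow> linfnorm (y - soft_shrink y lam) \<le> lam"
  by (auto simp: linfnorm_le_iff soft_shrink_def)

lemma inner_soft_shrink_residual: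
  "0 \<le> lam \<Longrightarrow>
     inner (soft_shrink y lam) (y - soft_shrink y lam) = lam * l1norm (soft_shrink y lam)"
  unfolding inner_vec_def l1norm_def sum_distrib_left
  by (rule sum.cong) (auto simp: soft_shrink_def)

lemma soft_shrink_neq_0:
  assumes "lam < linfnorm y"
  shows "soft_shrink y lam \<noteq> 0"
proof -
  obtain i where "\<bar>y $ i\<bar> = linfnorm y"
    by (rule linfnorm_attained)
  then have "soft_shrink y lam $ i \<noteq> 0"
    using assms by (auto simp: soft_shrink_def)
  then show ?thesis
    by auto
qed

lemma l1l2_optimal_iff_linfnorm_gt:
  fixes y x :: "real ^ 'n"
  assumes "lam > 0" and "alpha \<ge> 0" and "lam < linfnorm y"
  defines "z \<equiv> soft_shrink y lam"
  shows "l1l2_optimal alpha lam y x \<longleftrightarrow> x = ((norm z + alpha * lam) / norm z) *\<^sub>R z"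
proof -
  define s where "s = norm z + alpha * lam"
  have z: "0 < norm z"
    using soft_shrink_neq_0[OF assms(3)] by (simp add: z_def)
  have s: "0 < s"
    using z assms(1,2) by (simp add: s_def add_pos_nonneg)
  have split: "l1l2_reduced_obj alpha lam y w =
      (lam * l1norm w - inner w (y - z)) + (norm w * norm z - inner w z)
      + (norm w - s)\<^sup>2 / 2 - s\<^sup>2 / 2" for w
    by (simp add: l1l2_reduced_obj_def s_def inner_diff_right power2_eq_square field_simps)
  have clipping_gap: "0 \<le> lam * l1norm w - inner w (y - z)" for w
  proof -
    have "inner w (y - z) \<le> linfnorm (y - z) * l1norm w"
      by (rule inner_le_linfnorm_mult_l1norm)
    also have "\<dots> \<le> lam * l1norm w"
      using linfnorm_residual_soft_shrink_le[of lam y] assms(1) l1norm_nonneg[of w]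
      by (simp add: z_def mult_right_mono)
    finally show ?thesis
      by simp
  qed
  have cauchy_schwarz_gap: "0 \<le> norm w * norm z - inner w z" for w
    using norm_cauchy_schwarz[of w z] by simp
  have bound: "- s\<^sup>2 / 2 \<le> l1l2_reduced_obj alpha lam y w" for w
    using split[of w] clipping_gap[of w] cauchy_schwarz_gap[of w] zero_le_power2[of "norm w - s"]
    by linarith
  define x\<^sub>0 where "x\<^sub>0 = (s / norm z) *\<^sub>R z"
  have "norm x\<^sub>0 = s"
    using s z by (simp add: x\<^sub>0_def)
  moreover have "inner x\<^sub>0 z = norm x\<^sub>0 * norm z"
    using s z by (simp add: x\<^sub>0_def power2_norm_eq_inner[symmetric] power2_eq_square)
  moreover have "inner x\<^sub>0 (y - z) = lam * l1norm x\<^sub>0"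
    using inner_soft_shrink_residual[of lam y] s z assms(1)
    by (simp add: x\<^sub>0_def l1norm_scaleR z_def)
  ultimately have "l1l2_reduced_obj alpha lam y x\<^sub>0 = - s\<^sup>2 / 2"
    using split[of x\<^sub>0] by simp
  note optimal_iff = l1l2_optimal_iff_reduced_obj_eq_bound[OF assms(1) bound this]
  show ?thesis
    unfolding optimal_iff s_def[symmetric]
  proof
    assume "l1l2_reduced_obj alpha lam y x = - s\<^sup>2 / 2"
    then have "(norm x - s)\<^sup>2 = 0" and "inner x z = norm x * norm z"
      using split[of x] clipping_gap[of x] cauchy_schwarz_gap[of x] zero_le_power2[of "norm x - s"]
      by linarith+
    then have "norm z *\<^sub>R x = s *\<^sub>R z"
      using norm_cauchy_schwarz_eq[of x z] by simp
    then show "x = (s / norm z) *\<^sub>R z"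
      using z by (subst eq_commute) (simp add: vector_fraction_eq_iff)
  next
    assume "x = (s / norm z) *\<^sub>R z"
    then show "l1l2_reduced_obj alpha lam y x = - s\<^sup>2 / 2"
      using \<open>l1l2_reduced_obj alpha lam y x\<^sub>0 = - s\<^sup>2 / 2\<close> by (simp add: x\<^sub>0_def)
  qed
qed

theorem lemma1:
  fixes y :: "real ^ 'n" and lam alpha :: real
  assumes "lam > 0" and "alpha \<ge> 0"
  shows
   "(linfnorm y > lam \<longrightarrow>
       (\<forall>x. l1l2_optimal alpha lam y x \<longleftrightarrow>
            x = ((norm (soft_shrink y lam) + alpha * lam) / norm (soft_shrink y lam))
                  *\<^sub>R soft_shrink y lam))
  \<and> (linfnorm y = lam \<longrightarrow>
       (\<forall>x. l1l2_optimal alpha lam y x \<longleftrightarrow>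
            ((\<forall>i. \<bar>y $ i\<bar> < lam \<longrightarrow> x $ i = 0) \<and> norm x = alpha * lam
             \<and> (\<forall>i. x $ i * y $ i \<ge> 0)))
     \<and> (alpha > 0 \<and> card {i. \<bar>y $ i\<bar> = lam} > 1 \<longrightarrow>
            infinite {x. l1l2_optimal alpha lam y x}))
  \<and> ((1 - alpha) * lam < linfnorm y \<and> linfnorm y < lam \<longrightarrow>
       (\<forall>x. l1l2_optimal alpha lam y x \<longleftrightarrow>
            (card {i. x $ i \<noteq> 0} = 1
             \<and> (\<forall>i. \<bar>y $ i\<bar> < linfnorm y \<longrightarrow> x $ i = 0)
             \<and> norm x = linfnorm y + (alpha - 1) * lam
             \<and> (\<forall>i. x $ i * y $ i \<ge> 0)))
     \<and> (y \<noteq> 0 \<longrightarrow>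
            card {x. l1l2_optimal alpha lam y x} = card {i. \<bar>y $ i\<bar> = linfnorm y}))
  \<and> (linfnorm y \<le> (1 - alpha) * lam \<longrightarrow>
       (\<forall>x. l1l2_optimal alpha lam y x \<longleftrightarrow> x = 0))"
proof (intro conjI impI allI)
  fix x
  show "l1l2_optimal alpha lam y x \<longleftrightarrow>
      x = ((norm (soft_shrink y lam) + alpha * lam) / norm (soft_shrink y lam)) *\<^sub>R soft_shrink y lam"
    if "linfnorm y > lam"
    using l1l2_optimal_iff_linfnorm_gt[OF assms that] .
  show "l1l2_optimal alpha lam y x \<longleftrightarrow>
      (\<forall>i. \<bar>y $ i\<bar> < lam \<longrightarrow> x $ i = 0) \<and> norm x = alpha * lam \<and> (\<forall>i. x $ i * y $ i \<ge> 0)"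
    if "linfnorm y = lam"
    using l1l2_optimal_iff_linfnorm_eq[OF assms that] .
  show "l1l2_optimal alpha lam y x \<longleftrightarrow>
      card {i. x $ i \<noteq> 0} = 1 \<and> (\<forall>i. \<bar>y $ i\<bar> < linfnorm y \<longrightarrow> x $ i = 0)
      \<and> norm x = linfnorm y + (alpha - 1) * lam \<and> (\<forall>i. x $ i * y $ i \<ge> 0)"
    if "(1 - alpha) * lam < linfnorm y \<and> linfnorm y < lam"
    using l1l2_optimal_iff_linfnorm_between[OF assms(1)] that by blast
  show "l1l2_optimal alpha lam y x \<longleftrightarrow> x = 0"
    if "linfnorm y \<le> (1 - alpha) * lam"
    using l1l2_optimal_iff_linfnorm_small[OF assms that] .
next
  show "infinite {x. l1l2_optimal alpha lam y x}"
    if "linfnorm y = lam" and "alpha > 0 \<and> card {i. \<bar>y $ i\<bar> = lam} > 1"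
    using infinite_l1l2_optimal_linfnorm_eq[OF assms(1)] that by blast
  show "card {x. l1l2_optimal alpha lam y x} = card {i. \<bar>y $ i\<bar> = linfnorm y}"
    if "(1 - alpha) * lam < linfnorm y \<and> linfnorm y < lam" and "y \<noteq> 0"
    using card_l1l2_optimal_linfnorm_between[OF assms(1)] that by blast
qed

end
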